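(* Let $n\ge 1$. Let $X^\theta=(X^\theta_1,\dots,X^\theta_n)$ be $n$ independent random variables in $S_0$, identically distributed according to a Borel probability measure $\nu_0$ on $S_0$, and let $X^a=(X^a_1,\dots,X^a_n)$ be $n$ independent random variables in $\mathbb C^+$, identically distributed according to a Borel probability measure $\nu_1$ on $\mathbb C^+$, with $X^\theta$ independent of $X^a$. Set $X=(X^\theta,X^a)$ and let $X'=((X^\theta)',(X^a)')$ be an independent copy of $X$. For $A\subseteq[n]=\{1,\dots,n\}$ and $\alpha\in\{\theta,a\}$ define $X^{\alpha,A}$ by $X^{\alpha,A}_i=(X^\alpha_i)'$ if $i\in A$ and $X^{\alpha,A}_i=X^\alpha_i$ if $i\notin A$; write $X^{\alpha,j}=X^{\alpha,\{j\}}$. Define $X^{A_\theta,*}=(X^{\theta,A},X^a)$ and $X^{A_a,*}=((X^\theta)',X^{a,A})$. Let $h,f:S^n\to\mathbb C$ be measurable functions (where $S=S_0\times\mathbb C^+$ and a point of $S^n$ is identified with a pair $(x^\theta,x^a)\in S_0^n\times(\mathbb C^+)^n$) such that $h(X)$ and $f(X)$ are square integrable. For $j\in[n]$ and a point $Y=(Y^\theta,Y^a)$ (built from the coordinates of $X$ and $X'$) define $$\Delta^\theta_j f(Y)=f(Y^\theta,Y^a)-f(Y^{\theta,j},Y^a),\qquad \Delta^a_j f(Y)=f(Y^\theta,Y^a)-f(Y^\theta,Y^{a,j}),$$ where $Y^{\alpha,j}$ denotes $Y^\alpha$ with its $j$-th component replaced by $(X^\alpha_j)'$. Then, with $\mathrm{Cov}(U,V)=\mathbb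 E\{UV\}-\mathbb E\{U\}\mathbb E\{V\}$ and $\binom{n}{p}$ the binomial coefficient, $$\mathrm{Cov}(h(X),f(X))=\frac12\sum_{\alpha\in\{\theta,a\}}\ \sum_{A\subsetneq[n]}\frac{1}{\binom{n}{|A|}\,(n-|A|)}\sum_{j\notin A}\mathbb E\big\{\Delta^\alpha_j h(X)\,\Delta^\alpha_j f(X^{A_\alpha,*})\big\},$$ where the sum over $A$ includes the empty set.
   Context: Fix $0<\xi<1/2$ and let $Z=(0,1)^3$. Define $S_0=\{(\theta,\rho)\in Z\times[0,1/2]:\ \mathrm{dist}(\theta,\partial Z)>\rho+\xi\}$ and $\mathbb C^+$ the set of complex numbers with strictly positive imaginary part. Note that in $\Delta^\alpha_j f(X^{A_\alpha,*})$ the $j$-th $\alpha$-component of $X^{A_\alpha,*}$ (with $j\notin A$) is replaced by the corresponding component of the independent copy $X'$; e.g. $\Delta^a_j f(X^{A_a,*})=f((X^\theta)',X^{a,A})-f((X^\theta)',X^{a,A\cup\{j\}})$ and $\Delta^\theta_j f(X^{A_\theta,*})=f(X^{\theta,A},X^a)-f(X^{\theta,A\cup\{j\}},X^a)$. *)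

theory Defs
  imports "HOL-Probability.Probability"
begin

definition Zcube :: "(real^3) set" where
  "Zcube = {x. \<forall>i. 0 < x$i \<and> x$i < 1}"

definition S0 :: "real \<Rightarrow> ((real^3) \<times> real) set" where
  "S0 \<xi> = {(\<theta>, \<rho>). \<theta> \<in> Zcube \<and> 0 \<le> \<rho> \<and> \<rho> \<le> 1/2 \<and> infdist \<theta> (frontier Zcube) > \<rho> + \<xi>}"

definition Cplus :: "complex set" where
  "Cplus = {z. Im z > 0}"

definition repl :: "nat set \<Rightarrow> (nat \<Rightarrow> 'b) \<Rightarrow> (nat \<Rightarrow> 'b) \<Rightarrow> nat \<Rightarrow> 'b" where
  "repl A x x' = (\<lambda>i. if i \<in> A then x' i else x i)"

text \<open>Measurable space structure on S^n = S_0^n x (C^+)^n (ambient Borel structure), indices 1..n.\<close>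
definition SnM :: "nat \<Rightarrow> ((nat \<Rightarrow> (real^3) \<times> real) \<times> (nat \<Rightarrow> complex)) measure" where
  "SnM n = PiM {1..n} (\<lambda>_. borel) \<Otimes>\<^sub>M PiM {1..n} (\<lambda>_. borel)"

end

theory Submission
  imports Defs
begin

text \<open>
  By independence, Cov(h(X), f(X)) = E[h(X) (f(X) - f(X'))].
  Move from X to X' one coordinate at a time along a maximal chain of subsets of [n], first in the
  \<theta>-block and then in the a-block: f(X) - f(X') telescopes along the chain, and averaging over all
  maximal chains produces the weights 1 / (C(n,|A|) (n - |A|)).  Finally, exchanging the j-th
  \<theta>-coordinate (or a-coordinate) of X and X' preserves their joint law, turns X into X^{\<theta>,j}
  (or X^{a,j}) and reverses the sign of the increment f(X^{A_\<alpha>,*}) - f(X^{A_\<alpha> \<union> {j},*});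
  hence E[h(X) \<Delta>] = E[(h(X) - h(X^{\<alpha>,j})) \<Delta>] / 2 for every such increment \<Delta>.
\<close>

section \<open>Product measures determined on generating rectangles\<close>

lemma finite_pair_measure_eqI_generator:
  assumes "finite_measure M1" "finite_measure M2"
    and E1: "Int_stable E1" "E1 \<subseteq> Pow (space M1)" "space M1 \<in> E1"
      "sets M1 = sigma_sets (space M1) E1"
    and E2: "Int_stable E2" "E2 \<subseteq> Pow (space M2)" "space M2 \<in> E2"
      "sets M2 = sigma_sets (space M2) E2"
    and sets_N: "sets N = sets (M1 \<Otimes>\<^sub>M M2)"
    and rect: "\<And>A B. A \<in> E1 \<Longrightarrow> B \<in> E2 \<Longrightarrow> emeasure N (A \<times> B) = emeasure M1 A * emeasure M2 B"
  shows "N = M1 \<Otimes>\<^sub>M M2"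
proof -
  interpret M2: finite_measure M2 by fact
  interpret M12: finite_measure "M1 \<Otimes>\<^sub>M M2"
    by (rule finite_measure_pair_measure) fact+
  let ?E = "{A \<times> B | A B. A \<in> E1 \<and> B \<in> E2}"
  let ?\<Omega> = "space M1 \<times> space M2"
  have "Int_stable ?E"
  proof (rule Int_stableI)
    fix X Y assume "X \<in> ?E" "Y \<in> ?E"
    then obtain A B C D where "X = A \<times> B" "Y = C \<times> D" "A \<in> E1" "B \<in> E2" "C \<in> E1" "D \<in> E2"
      by blast
    moreover have "A \<inter> C \<in> E1" "B \<inter> D \<in> E2"
      using E1(1) E2(1) calculation by (auto simp: Int_stable_def)
    ultimately show "X \<inter> Y \<in> ?E"
      by (auto simp: Times_Int_Times)
  qed
  moreover have E_space: "?E \<subseteq> Pow ?\<Omega>"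
    using E1(2) E2(2) by auto
  moreover have sets_eq: "sets (M1 \<Otimes>\<^sub>M M2) = sigma_sets ?\<Omega> ?E"
  proof -
    have "sets (M1 \<Otimes>\<^sub>M M2) = sets (sigma ?\<Omega> ?E)"
      by (rule sets_pair_eq[where Ca="{space M1}" and Cb="{space M2}"]) (use E1 E2 in auto)
    also have "\<dots> = sigma_sets ?\<Omega> ?E"
      using E_space by (rule sets_measure_of)
    finally show ?thesis .
  qed
  moreover have "emeasure (M1 \<Otimes>\<^sub>M M2) X = emeasure N X" if "X \<in> ?E" for X
    using that E1 E2 by (auto simp: rect M2.emeasure_pair_measure_Times)
  ultimately show ?thesis
    using E1(3) E2(3) sets_N
    by (intro measure_eqI_generator_eq[where A="\<lambda>_. ?\<Omega>", symmetric]) (auto simp: space_pair_measure)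
qed

lemma rectangles_generate_pair_measure:
  "Int_stable {a \<times> b |a b. a \<in> sets A \<and> b \<in> sets B}"
  "{a \<times> b |a b. a \<in> sets A \<and> b \<in> sets B} \<subseteq> Pow (space (A \<Otimes>\<^sub>M B))"
  "space (A \<Otimes>\<^sub>M B) \<in> {a \<times> b |a b. a \<in> sets A \<and> b \<in> sets B}"
  "sets (A \<Otimes>\<^sub>M B) = sigma_sets (space (A \<Otimes>\<^sub>M B)) {a \<times> b |a b. a \<in> sets A \<and> b \<in> sets B}"
  by (auto simp: Int_stable_pair_measure_generator sets_pair_measure space_pair_measure
      dest: sets.sets_into_space)

lemma boxes_generate_PiM:
  "Int_stable (prod_algebra I M)" "prod_algebra I M \<subseteq> Pow (space (PiM I M))"
  "space (PiM I M) \<in> prod_algebra I M" "sets (PiM I M) = sigma_sets (space (PiM I M)) (prod_algebra I M)"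
  unfolding space_PiM
  by (rule Int_stable_prod_algebra prod_algebra_sets_into_space space_in_prod_algebra sets_PiM)+

lemma measurable_pair_pair_interchange:
  "(\<lambda>((a, b), (c, d)). ((a, c), (b, d))) \<in> measurable ((A \<Otimes>\<^sub>M B) \<Otimes>\<^sub>M (C \<Otimes>\<^sub>M D)) ((A \<Otimes>\<^sub>M C) \<Otimes>\<^sub>M (B \<Otimes>\<^sub>M D))"
  unfolding case_prod_beta by measurable

lemma distr_pair_pair_interchange:
  assumes "finite_measure A" "finite_measure B" "finite_measure C" "finite_measure D"
  shows "distr ((A \<Otimes>\<^sub>M B) \<Otimes>\<^sub>M (C \<Otimes>\<^sub>M D)) ((A \<Otimes>\<^sub>M C) \<Otimes>\<^sub>M (B \<Otimes>\<^sub>M D))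
      (\<lambda>((a, b), (c, d)). ((a, c), (b, d))) = (A \<Otimes>\<^sub>M C) \<Otimes>\<^sub>M (B \<Otimes>\<^sub>M D)"
proof (rule finite_pair_measure_eqI_generator[OF _ _ rectangles_generate_pair_measure rectangles_generate_pair_measure])
  interpret B: finite_measure B by fact
  interpret C: finite_measure C by fact
  interpret D: finite_measure D by fact
  interpret BD: finite_measure "B \<Otimes>\<^sub>M D" by (rule finite_measure_pair_measure) fact+
  interpret CD: finite_measure "C \<Otimes>\<^sub>M D" by (rule finite_measure_pair_measure) fact+
  let ?\<phi> = "\<lambda>((a, b), (c, d)). ((a, c), (b, d))"
  show "finite_measure (A \<Otimes>\<^sub>M C)" "finite_measure (B \<Otimes>\<^sub>M D)"
    using assms by (auto intro: finite_measure_pair_measure)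
  show "sets (distr ((A \<Otimes>\<^sub>M B) \<Otimes>\<^sub>M (C \<Otimes>\<^sub>M D)) ((A \<Otimes>\<^sub>M C) \<Otimes>\<^sub>M (B \<Otimes>\<^sub>M D)) ?\<phi>)
      = sets ((A \<Otimes>\<^sub>M C) \<Otimes>\<^sub>M (B \<Otimes>\<^sub>M D))"
    by simp
  fix X Y assume "X \<in> {a \<times> c |a c. a \<in> sets A \<and> c \<in> sets C}" "Y \<in> {b \<times> d |b d. b \<in> sets B \<and> d \<in> sets D}"
  then obtain a b c d where X: "X = a \<times> c" and Y: "Y = b \<times> d"
    and sets: "a \<in> sets A" "b \<in> sets B" "c \<in> sets C" "d \<in> sets D"
    by blast
  have "?\<phi> -` (X \<times> Y) \<inter> space ((A \<Otimes>\<^sub>M B) \<Otimes>\<^sub>M (C \<Otimes>\<^sub>M D)) = (a \<times> b) \<times> (c \<times> d)"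
    using sets by (auto simp: X Y space_pair_measure dest: sets.sets_into_space)
  moreover have "X \<times> Y \<in> sets ((A \<Otimes>\<^sub>M C) \<Otimes>\<^sub>M (B \<Otimes>\<^sub>M D))"
    using sets by (simp add: X Y)
  ultimately show "emeasure (distr ((A \<Otimes>\<^sub>M B) \<Otimes>\<^sub>M (C \<Otimes>\<^sub>M D)) ((A \<Otimes>\<^sub>M C) \<Otimes>\<^sub>M (B \<Otimes>\<^sub>M D)) ?\<phi>) (X \<times> Y)
      = emeasure (A \<Otimes>\<^sub>M C) X * emeasure (B \<Otimes>\<^sub>M D) Y"
    using sets by (simp add: emeasure_distr[OF measurable_pair_pair_interchange] X Y ac_simps
        B.emeasure_pair_measure_Times C.emeasure_pair_measure_Times D.emeasure_pair_measure_Times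
        BD.emeasure_pair_measure_Times CD.emeasure_pair_measure_Times)
qed

lemma measurable_case_prod_pair:
  assumes "f \<in> measurable M1 N1" "g \<in> measurable M2 N2"
  shows "(\<lambda>(x, y). (f x, g y)) \<in> measurable (M1 \<Otimes>\<^sub>M M2) (N1 \<Otimes>\<^sub>M N2)"
proof -
  have "(\<lambda>p. f (fst p)) \<in> measurable (M1 \<Otimes>\<^sub>M M2) N1" "(\<lambda>p. g (snd p)) \<in> measurable (M1 \<Otimes>\<^sub>M M2) N2"
    using assms by (auto intro: measurable_compose[OF measurable_fst] measurable_compose[OF measurable_snd])
  then show ?thesis
    by (simp add: measurable_pair_iff comp_def case_prod_beta)
qed

section \<open>Replacing coordinates in finite products\<close>

lemma repl_empty [simp]: "repl {} x y = x"
  by (simp add: repl_def)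

lemma repl_eq_right: "x \<in> extensional I \<Longrightarrow> y \<in> extensional I \<Longrightarrow> repl I x y = y"
  by (auto simp: repl_def extensional_def fun_eq_iff)

lemma measurable_repl [measurable]:
  assumes "f \<in> measurable N (PiM I M)" "g \<in> measurable N (PiM I M)"
  shows "(\<lambda>w. repl S (f w) (g w)) \<in> measurable N (PiM I M)"
  unfolding repl_def
proof (rule measurable_PiM_single')
  fix i assume "i \<in> I"
  then show "(\<lambda>w. if i \<in> S then g w i else f w i) \<in> measurable N (M i)"
    using assms by (cases "i \<in> S") (auto intro: measurable_compose[OF _ measurable_component_singleton])
next
  show "(\<lambda>w i. if i \<in> S then g w i else f w i) \<in> space N \<rightarrow> (\<Pi>\<^sub>E i\<in>I. space (M i))"
    using measurable_space[OF assms(1)] measurable_space[OF assms(2)]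
    by (auto simp: space_PiM PiE_iff extensional_def)
qed

lemma measurable_repl_swap:
  "(\<lambda>(x, y). (repl S x y, repl S y x)) \<in> measurable (PiM I M \<Otimes>\<^sub>M PiM I M) (PiM I M \<Otimes>\<^sub>M PiM I M)"
  unfolding case_prod_beta by measurable

lemma vimage_repl_swap_PiE:
  assumes "\<And>i. i \<in> I \<Longrightarrow> F i \<subseteq> space (M i)" "\<And>i. i \<in> I \<Longrightarrow> G i \<subseteq> space (M i)"
  shows "(\<lambda>(x, y). (repl S x y, repl S y x)) -` (PiE I F \<times> PiE I G) \<inter> space (PiM I M \<Otimes>\<^sub>M PiM I M)
    = PiE I (\<lambda>i. if i \<in> S then G i else F i) \<times> PiE I (\<lambda>i. if i \<in> S then F i else G i)"
  using assms by (fastforce simp: space_pair_measure space_PiM PiE_iff repl_def extensional_def split: if_splits)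

lemma distr_PiM_pair_repl_swap:
  fixes M :: "nat \<Rightarrow> 'a measure"
  assumes "finite_product_prob_space M I"
  shows "distr (PiM I M \<Otimes>\<^sub>M PiM I M) (PiM I M \<Otimes>\<^sub>M PiM I M) (\<lambda>(x, y). (repl S x y, repl S y x))
    = PiM I M \<Otimes>\<^sub>M PiM I M"
proof -
  interpret finite_product_prob_space M I by fact
  let ?P = "PiM I M"
  let ?\<sigma> = "\<lambda>(x, y). (repl S x y, repl S y x)"
  have P: "prob_space ?P"
    by (intro prob_space_PiM prob_space)
  then have finite_P: "finite_measure ?P"
    by (simp add: prob_space.finite_measure)
  show ?thesis
  proof (rule finite_pair_measure_eqI_generator[OF finite_P finite_P boxes_generate_PiM boxes_generate_PiM])
    show "sets (distr (?P \<Otimes>\<^sub>M ?P) (?P \<Otimes>\<^sub>M ?P) ?\<sigma>) = sets (?P \<Otimes>\<^sub>M ?P)"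
      by simp
    fix X Y assume "X \<in> prod_algebra I M" "Y \<in> prod_algebra I M"
    then obtain F G where X: "X = PiE I F" and Y: "Y = PiE I G"
      and F: "\<And>i. i \<in> I \<Longrightarrow> F i \<in> sets (M i)" and G: "\<And>i. i \<in> I \<Longrightarrow> G i \<in> sets (M i)"
      unfolding prod_algebra_eq_finite[OF finite_index] by blast
    let ?F' = "\<lambda>i. if i \<in> S then G i else F i" and ?G' = "\<lambda>i. if i \<in> S then F i else G i"
    have "X \<times> Y \<in> sets (?P \<Otimes>\<^sub>M ?P)"
      unfolding X Y using F G by (intro pair_measureI sets_PiM_I_finite finite_index)
    then have "emeasure (distr (?P \<Otimes>\<^sub>M ?P) (?P \<Otimes>\<^sub>M ?P) ?\<sigma>) (X \<times> Y) = emeasure (?P \<Otimes>\<^sub>M ?P) (PiE I ?F' \<times> PiE I ?G')"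
      using F G by (simp add: emeasure_distr[OF measurable_repl_swap] X Y vimage_repl_swap_PiE sets.sets_into_space)
    also have "\<dots> = emeasure ?P (PiE I ?F') * emeasure ?P (PiE I ?G')"
      using F G by (intro sigma_finite_measure.emeasure_pair_measure_Times prob_space_imp_sigma_finite P
          sets_PiM_I_finite finite_index) simp_all
    also have "\<dots> = (\<Prod>i\<in>I. emeasure (M i) (?F' i)) * (\<Prod>i\<in>I. emeasure (M i) (?G' i))"
      using F G by (simp add: measure_times)
    also have "\<dots> = (\<Prod>i\<in>I. emeasure (M i) (F i)) * (\<Prod>i\<in>I. emeasure (M i) (G i))"
      unfolding prod.distrib[symmetric] by (intro prod.cong) (auto simp: mult.commute)
    also have "\<dots> = emeasure ?P X * emeasure ?P Y"
      using F G by (simp add: X Y measure_times)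
    finally show "emeasure (distr (?P \<Otimes>\<^sub>M ?P) (?P \<Otimes>\<^sub>M ?P) ?\<sigma>) (X \<times> Y) = emeasure ?P X * emeasure ?P Y" .
  qed
qed

lemma finite_product_prob_space_const:
  "prob_space N \<Longrightarrow> finite I \<Longrightarrow> finite_product_prob_space (\<lambda>_. N) I"
  by (simp add: finite_product_prob_space_def finite_product_sigma_finite_def product_prob_space_def
      product_sigma_finite_def product_prob_space_axioms_def finite_product_sigma_finite_axioms_def
      prob_space_imp_sigma_finite)

section \<open>Averaging along maximal chains of subsets\<close>

text \<open>chain_weight I A is the probability that a uniformly random maximal chain of subsets of I
  passes through a given edge A \<subset> insert j A, so chain_average I D is the expected sum of D along
  such a chain.\<close>
definition chain_weight :: "'i set \<Rightarrow> 'i set \<Rightarrow> 'a::field_char_0" where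
  "chain_weight I A = 1 / (of_nat (card I choose card A) * of_nat (card I - card A))"

definition chain_average :: "'i set \<Rightarrow> ('i set \<Rightarrow> 'i \<Rightarrow> 'a::field_char_0) \<Rightarrow> 'a" where
  "chain_average I D = (\<Sum>A\<in>{A. A \<subset> I}. chain_weight I A * (\<Sum>j\<in>I - A. D A j))"

lemma chain_average_cong:
  "(\<And>A j. A \<subset> I \<Longrightarrow> j \<in> I - A \<Longrightarrow> D A j = D' A j) \<Longrightarrow> chain_average I D = chain_average I D'"
  unfolding chain_average_def by (intro sum.cong refl arg_cong2[where f="(*)"]) auto

lemma of_nat_Suc_div_binomial:
  assumes "k < n"
  shows "of_nat (Suc k) / (of_nat (n choose k) * of_nat (n - k)) = (1 / of_nat (n choose Suc k) :: 'a::field_char_0)"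
proof -
  have "(n choose k) * (n - k) = Suc k * (n choose Suc k)"
    using binomial_absorb_comp[of n k] binomial_absorption[of k n] by (simp add: mult.commute)
  then have "(of_nat (n choose k) * of_nat (n - k) :: 'a) = of_nat (Suc k) * of_nat (n choose Suc k)"
    by (metis of_nat_mult)
  moreover have "(n choose Suc k) \<noteq> 0"
    using assms by simp
  ultimately show ?thesis
    by (simp del: of_nat_Suc)
qed

lemma sum_subset_lattice_edges:
  assumes "finite I"
  shows "(\<Sum>A\<in>{A. A \<subset> I}. \<Sum>j\<in>I - A. F A j) = (\<Sum>B\<in>{B. B \<subseteq> I \<and> B \<noteq> {}}. \<Sum>j\<in>B. F (B - {j}) j)"
proof -
  have fin: "finite {A. A \<subset> I}" "finite {B. B \<subseteq> I \<and> B \<noteq> {}}"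
    using assms by (auto intro: finite_subset[of _ "Pow I"])
  have "(\<Sum>A\<in>{A. A \<subset> I}. \<Sum>j\<in>I - A. F A j) = (\<Sum>(A, j)\<in>Sigma {A. A \<subset> I} (\<lambda>A. I - A). F A j)"
    using fin assms by (intro sum.Sigma) auto
  also have "\<dots> = (\<Sum>(B, j)\<in>Sigma {B. B \<subseteq> I \<and> B \<noteq> {}} (\<lambda>B. B). F (B - {j}) j)"
    by (rule sum.reindex_bij_witness[where i="\<lambda>(B, j). (B - {j}, j)" and j="\<lambda>(A, j). (insert j A, j)"])
      auto
  also have "\<dots> = (\<Sum>B\<in>{B. B \<subseteq> I \<and> B \<noteq> {}}. \<Sum>j\<in>B. F (B - {j}) j)"
    using fin assms by (intro sum.Sigma[symmetric]) (auto intro: finite_subset)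
  finally show ?thesis .
qed

lemma chain_weight_out:
  assumes "finite I" "A \<subset> I"
  shows "of_nat (card (I - A)) * chain_weight I A = (1 / of_nat (card I choose card A) :: 'a::field_char_0)"
proof -
  have "card A < card I" "card (I - A) = card I - card A"
    using assms psubset_card_mono[of I A] by (auto simp: card_Diff_subset finite_subset)
  then show ?thesis
    using of_nat_Suc_div_binomial[of "card A" "card I"] by (simp add: chain_weight_def)
qed

lemma chain_weight_in:
  assumes "finite I" "B \<subseteq> I" "B \<noteq> {}"
  shows "(\<Sum>j\<in>B. chain_weight I (B - {j})) = (1 / of_nat (card I choose card B) :: 'a::field_char_0)"
proof -
  have "card B \<noteq> 0"
    using assms by (simp add: finite_subset)
  then obtain k where k: "card B = Suc k"
    using not0_implies_Suc by blast
  have "k < card I"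
    using card_mono[OF assms(1,2)] k by simp
  have "(\<Sum>j\<in>B. chain_weight I (B - {j}) :: 'a) = (\<Sum>j\<in>B. 1 / (of_nat (card I choose k) * of_nat (card I - k)))"
    using k by (intro sum.cong) (simp_all add: chain_weight_def)
  also have "\<dots> = of_nat (Suc k) / (of_nat (card I choose k) * of_nat (card I - k))"
    using k by simp
  also have "\<dots> = 1 / of_nat (card I choose card B)"
    unfolding of_nat_Suc_div_binomial[OF \<open>k < card I\<close>] k ..
  finally show ?thesis .
qed

text \<open>Each B \<subseteq> I gets the total weight 1 / C(n, |B|) both from the edges leaving it and from
  those entering it, so everything cancels except g {} and g I.\<close>
lemma chain_average_telescope:
  fixes g :: "'i set \<Rightarrow> 'a::field_char_0"
  assumes "finite I"
  shows "chain_average I (\<lambda>A j. g A - g (insert j A)) = g {} - g I"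
proof -
  define c where "c B = 1 / (of_nat (card I choose card B) :: 'a)" for B :: "'i set"
  have "chain_average I (\<lambda>A j. g A - g (insert j A))
      = (\<Sum>A\<in>{A. A \<subset> I}. \<Sum>j\<in>I - A. chain_weight I A * g A)
        - (\<Sum>A\<in>{A. A \<subset> I}. \<Sum>j\<in>I - A. chain_weight I A * g (insert j A))"
    by (simp add: chain_average_def sum_distrib_left right_diff_distrib sum_subtractf mult.left_commute)
  also have "(\<Sum>A\<in>{A. A \<subset> I}. \<Sum>j\<in>I - A. chain_weight I A * g A) = (\<Sum>A\<in>{A. A \<subset> I}. c A * g A)"
    by (intro sum.cong refl) (simp add: c_def mult.assoc[symmetric] chain_weight_out[OF assms])
  also have "(\<Sum>A\<in>{A. A \<subset> I}. \<Sum>j\<in>I - A. chain_weight I A * g (insert j A))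
      = (\<Sum>B\<in>{B. B \<subseteq> I \<and> B \<noteq> {}}. \<Sum>j\<in>B. chain_weight I (B - {j}) * g B)"
    unfolding sum_subset_lattice_edges[OF assms] by (intro sum.cong refl) (simp add: insert_absorb)
  also have "\<dots> = (\<Sum>B\<in>{B. B \<subseteq> I \<and> B \<noteq> {}}. c B * g B)"
    by (intro sum.cong refl) (simp add: c_def sum_distrib_right[symmetric] chain_weight_in[OF assms])
  also have "(\<Sum>A\<in>{A. A \<subset> I}. c A * g A) - (\<Sum>B\<in>{B. B \<subseteq> I \<and> B \<noteq> {}}. c B * g B)
      = c {} * g {} - c I * g I"
  proof -
    have "{A. A \<subset> I} = Pow I - {I}" "{B. B \<subseteq> I \<and> B \<noteq> {}} = Pow I - {{}}"
      by auto
    then show ?thesis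
      using assms by (simp add: sum_diff1)
  qed
  also have "\<dots> = g {} - g I"
    by (simp add: c_def)
  finally show ?thesis .
qed

section \<open>Hybrids of two independent copies\<close>

lemma integrable_mult_of_square_integrable:
  fixes p q :: "'a \<Rightarrow> 'b::{real_normed_div_algebra, banach, second_countable_topology}"
  assumes [measurable]: "p \<in> borel_measurable M" "q \<in> borel_measurable M"
    and "integrable M (\<lambda>x. (norm (p x))\<^sup>2)" "integrable M (\<lambda>x. (norm (q x))\<^sup>2)"
  shows "integrable M (\<lambda>x. p x * q x)"
proof (rule Bochner_Integration.integrable_bound)
  show "integrable M (\<lambda>x. (norm (p x))\<^sup>2 + (norm (q x))\<^sup>2)"
    using assms(3,4) by (rule Bochner_Integration.integrable_add)
  show "(\<lambda>x. p x * q x) \<in> borel_measurable M"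
    by measurable
  have "norm (p x) * norm (q x) \<le> (norm (p x))\<^sup>2 + (norm (q x))\<^sup>2" for x
    using sum_squares_bound[of "norm (p x)" "norm (q x)"] mult_nonneg_nonneg[OF norm_ge_zero[of "p x"] norm_ge_zero[of "q x"]]
    by linarith
  then show "AE x in M. norm (p x * q x) \<le> norm ((norm (p x))\<^sup>2 + (norm (q x))\<^sup>2)"
    by (simp add: norm_mult)
qed

text \<open>For w = (X, X'), the paper's X^{A_\<theta>,*} and X^{A_a,*} are hybrid A {} w and hybrid I A w.\<close>
definition hybrid :: "nat set \<Rightarrow> nat set \<Rightarrow> ((nat \<Rightarrow> 'a) \<times> (nat \<Rightarrow> 'b)) \<times> ((nat \<Rightarrow> 'a) \<times> (nat \<Rightarrow> 'b))
    \<Rightarrow> (nat \<Rightarrow> 'a) \<times> (nat \<Rightarrow> 'b)" where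
  "hybrid S T = (\<lambda>((t, a), (t', a')). (repl S t t', repl T a a'))"

definition exchange :: "nat set \<Rightarrow> nat set \<Rightarrow> ((nat \<Rightarrow> 'a) \<times> (nat \<Rightarrow> 'b)) \<times> ((nat \<Rightarrow> 'a) \<times> (nat \<Rightarrow> 'b))
    \<Rightarrow> ((nat \<Rightarrow> 'a) \<times> (nat \<Rightarrow> 'b)) \<times> ((nat \<Rightarrow> 'a) \<times> (nat \<Rightarrow> 'b))" where
  "exchange S T = (\<lambda>((t, a), (t', a')). ((repl S t t', repl T a a'), (repl S t' t, repl T a' a)))"

lemma fst_exchange: "fst (exchange S T w) = hybrid S T w"
  by (simp add: exchange_def hybrid_def split: prod.splits)

lemma hybrid_exchange: "hybrid S T (exchange U V w) = hybrid (sym_diff S U) (sym_diff T V) w"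
  by (auto simp: exchange_def hybrid_def repl_def fun_eq_iff split: prod.splits)

lemma hybrid_empty: "hybrid {} {} w = fst w"
  by (simp add: hybrid_def split: prod.splits)

locale two_block_product =
  \<theta>: finite_product_prob_space M0 I + a: finite_product_prob_space M1 I
  for M0 :: "nat \<Rightarrow> 'a measure" and M1 :: "nat \<Rightarrow> 'b measure" and I :: "nat set"
begin

abbreviation Sn :: "((nat \<Rightarrow> 'a) \<times> (nat \<Rightarrow> 'b)) measure" where
  "Sn \<equiv> PiM I M0 \<Otimes>\<^sub>M PiM I M1"

abbreviation Sn2 :: "(((nat \<Rightarrow> 'a) \<times> (nat \<Rightarrow> 'b)) \<times> ((nat \<Rightarrow> 'a) \<times> (nat \<Rightarrow> 'b))) measure" where
  "Sn2 \<equiv> Sn \<Otimes>\<^sub>M Sn"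

lemma prob_space_Sn: "prob_space Sn"
  by (intro prob_space_pair prob_space_PiM \<theta>.prob_space a.prob_space)

lemma measurable_exchange [measurable]: "exchange S T \<in> measurable Sn2 Sn2"
  unfolding exchange_def case_prod_beta by measurable

lemma measurable_hybrid [measurable]: "hybrid S T \<in> measurable Sn2 Sn"
  unfolding hybrid_def case_prod_beta by measurable

lemma hybrid_all_left:
  assumes "w \<in> space Sn2"
  shows "hybrid I T w = (fst (snd w), repl T (snd (fst w)) (snd (snd w)))"
  using assms by (auto simp: hybrid_def space_pair_measure space_PiM PiE_def repl_eq_right split: prod.splits)

lemma hybrid_all: "w \<in> space Sn2 \<Longrightarrow> hybrid I I w = snd w"
  by (auto simp: hybrid_def space_pair_measure space_PiM PiE_def repl_eq_right split: prod.splits)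

text \<open>Exchanging coordinates factors through the isomorphism of Sn2 with
  (P \<Otimes> P) \<Otimes> (Q \<Otimes> Q), on which it acts as a product of two swaps.\<close>
lemma distr_exchange: "distr Sn2 Sn2 (exchange S T) = Sn2"
proof -
  let ?P = "PiM I M0" and ?Q = "PiM I M1"
  let ?PPQQ = "(?P \<Otimes>\<^sub>M ?P) \<Otimes>\<^sub>M (?Q \<Otimes>\<^sub>M ?Q)"
  let ?\<rho> = "\<lambda>((a, b), (c, d)). ((a, c), (b, d))"
  let ?\<sigma>S = "\<lambda>(u, v). (repl S u v, repl S v u)" and ?\<sigma>T = "\<lambda>(u, v). (repl T u v, repl T v u)"
  let ?\<sigma> = "\<lambda>(x, y). (?\<sigma>S x, ?\<sigma>T y)"
  have P: "prob_space ?P" and Q: "prob_space ?Q"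
    by (intro prob_space_PiM \<theta>.prob_space a.prob_space)+
  then have finite_PQ: "finite_measure ?P" "finite_measure ?Q"
    by (simp_all add: prob_space.finite_measure)
  have \<sigma>_measurable: "?\<sigma> \<in> measurable ?PPQQ ?PPQQ"
    by (intro measurable_case_prod_pair measurable_repl_swap)
  have "distr ?PPQQ ?PPQQ ?\<sigma> = distr (?P \<Otimes>\<^sub>M ?P) (?P \<Otimes>\<^sub>M ?P) ?\<sigma>S \<Otimes>\<^sub>M distr (?Q \<Otimes>\<^sub>M ?Q) (?Q \<Otimes>\<^sub>M ?Q) ?\<sigma>T"
    by (rule pair_measure_distr[OF measurable_repl_swap measurable_repl_swap, symmetric])
      (simp only: distr_PiM_pair_repl_swap a.finite_product_prob_space_axioms prob_space_imp_sigma_finite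
        prob_space_pair Q)
  also have "\<dots> = ?PPQQ"
    by (simp only: distr_PiM_pair_repl_swap \<theta>.finite_product_prob_space_axioms a.finite_product_prob_space_axioms)
  finally have swap: "distr ?PPQQ ?PPQQ ?\<sigma> = ?PPQQ" .
  have factor: "exchange S T = ?\<rho> \<circ> (?\<sigma> \<circ> ?\<rho>)"
    by (simp add: exchange_def fun_eq_iff case_prod_beta)
  have "distr Sn2 Sn2 (exchange S T) = distr (distr (distr Sn2 ?PPQQ ?\<rho>) ?PPQQ ?\<sigma>) Sn2 ?\<rho>"
    unfolding factor
    by (simp only: distr_distr[OF \<sigma>_measurable measurable_pair_pair_interchange]
        distr_distr[OF measurable_pair_pair_interchange measurable_comp[OF measurable_pair_pair_interchange \<sigma>_measurable]])
  also have "\<dots> = Sn2"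
    using finite_PQ by (simp only: distr_pair_pair_interchange swap)
  finally show ?thesis .
qed

lemma distr_hybrid: "distr Sn2 Sn (hybrid S T) = Sn"
proof -
  have factor: "hybrid S T = fst \<circ> exchange S T"
    by (simp add: fun_eq_iff fst_exchange)
  have "distr Sn2 Sn (hybrid S T) = distr (distr Sn2 Sn2 (exchange S T)) Sn fst"
    unfolding factor by (rule distr_distr[OF measurable_fst measurable_exchange, symmetric])
  also have "\<dots> = Sn"
    by (simp add: distr_exchange prob_space.distr_pair_fst[OF prob_space_Sn])
  finally show ?thesis .
qed

lemma integral_hybrid:
  fixes g :: "_ \<Rightarrow> 'c::{banach, second_countable_topology}"
  assumes "g \<in> borel_measurable Sn"
  shows "(\<integral>w. g (hybrid S T w) \<partial>Sn2) = (\<integral>x. g x \<partial>Sn)"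
  using integral_distr[OF measurable_hybrid assms, of S T] by (simp add: distr_hybrid)

lemma square_integrable_hybrid:
  fixes g :: "_ \<Rightarrow> 'c::{banach, second_countable_topology}"
  assumes [measurable]: "g \<in> borel_measurable Sn" and "integrable Sn (\<lambda>x. (norm (g x))\<^sup>2)"
  shows "integrable Sn2 (\<lambda>w. (norm (g (hybrid S T w)))\<^sup>2)"
proof -
  have "(\<lambda>x. (norm (g x))\<^sup>2) \<in> borel_measurable Sn"
    by measurable
  then show ?thesis
    using integrable_distr_eq[OF measurable_hybrid, of "\<lambda>x. (norm (g x))\<^sup>2" S T] assms(2)
    by (simp add: distr_hybrid)
qed

lemma integrable_mult_hybrid:
  fixes h f :: "_ \<Rightarrow> 'c::{real_normed_div_algebra, banach, second_countable_topology}"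
  assumes "h \<in> borel_measurable Sn" "f \<in> borel_measurable Sn"
    and "integrable Sn (\<lambda>x. (norm (h x))\<^sup>2)" "integrable Sn (\<lambda>x. (norm (f x))\<^sup>2)"
  shows "integrable Sn2 (\<lambda>w. h (hybrid S T w) * f (hybrid S' T' w))"
proof (rule integrable_mult_of_square_integrable)
  show "(\<lambda>w. h (hybrid S T w)) \<in> borel_measurable Sn2" "(\<lambda>w. f (hybrid S' T' w)) \<in> borel_measurable Sn2"
    using assms(1,2) by (auto intro: measurable_compose[OF measurable_hybrid])
  show "integrable Sn2 (\<lambda>w. (norm (h (hybrid S T w)))\<^sup>2)" "integrable Sn2 (\<lambda>w. (norm (f (hybrid S' T' w)))\<^sup>2)"
    using assms by (auto intro: square_integrable_hybrid)
qed

lemma integral_exchange: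
  fixes G :: "_ \<Rightarrow> 'c::{banach, second_countable_topology}"
  assumes "G \<in> borel_measurable Sn2"
  shows "(\<integral>w. G (exchange U V w) \<partial>Sn2) = (\<integral>w. G w \<partial>Sn2)"
  using integral_distr[OF measurable_exchange assms, of U V] by (simp add: distr_exchange)

lemma integral_increment_exchange:
  fixes h f :: "_ \<Rightarrow> 'c::{real_normed_field, banach, second_countable_topology}"
  assumes [measurable]: "h \<in> borel_measurable Sn" "f \<in> borel_measurable Sn"
    and "integrable Sn (\<lambda>x. (norm (h x))\<^sup>2)" "integrable Sn (\<lambda>x. (norm (f x))\<^sup>2)"
    and S': "S' = sym_diff S U" and T': "T' = sym_diff T V"
  shows "(\<integral>w. (h (hybrid {} {} w) - h (hybrid U V w)) * (f (hybrid S T w) - f (hybrid S' T' w)) \<partial>Sn2)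
    = 2 * (\<integral>w. h (hybrid {} {} w) * f (hybrid S T w) \<partial>Sn2)
      - 2 * (\<integral>w. h (hybrid {} {} w) * f (hybrid S' T' w) \<partial>Sn2)"
proof -
  have int: "integrable Sn2 (\<lambda>w. h (hybrid S1 T1 w) * f (hybrid S2 T2 w))" for S1 T1 S2 T2
    using assms(1-4) by (rule integrable_mult_hybrid)
  have swap: "(\<integral>w. h (hybrid U V w) * f (hybrid S1 T1 w) \<partial>Sn2)
      = (\<integral>w. h (hybrid {} {} w) * f (hybrid (sym_diff S1 U) (sym_diff T1 V) w) \<partial>Sn2)" for S1 T1
  proof -
    have "sym_diff (sym_diff X Y) Y = X" for X Y :: "nat set"
      by auto
    then show ?thesis
      using integral_exchange[of "\<lambda>w. h (hybrid {} {} w) * f (hybrid (sym_diff S1 U) (sym_diff T1 V) w)" U V]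
      by (simp add: hybrid_exchange)
  qed
  have "sym_diff S' U = S" "sym_diff T' V = T"
    using S' T' by auto
  then have swapped: "(\<integral>w. h (hybrid U V w) * f (hybrid S T w) \<partial>Sn2) = (\<integral>w. h (hybrid {} {} w) * f (hybrid S' T' w) \<partial>Sn2)"
      "(\<integral>w. h (hybrid U V w) * f (hybrid S' T' w) \<partial>Sn2) = (\<integral>w. h (hybrid {} {} w) * f (hybrid S T w) \<partial>Sn2)"
    using swap[of S T] swap[of S' T'] S' T' by simp_all
  have "(\<integral>w. (h (hybrid {} {} w) - h (hybrid U V w)) * (f (hybrid S T w) - f (hybrid S' T' w)) \<partial>Sn2)
    = ((\<integral>w. h (hybrid {} {} w) * f (hybrid S T w) \<partial>Sn2) - (\<integral>w. h (hybrid {} {} w) * f (hybrid S' T' w) \<partial>Sn2))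
      - ((\<integral>w. h (hybrid U V w) * f (hybrid S T w) \<partial>Sn2) - (\<integral>w. h (hybrid U V w) * f (hybrid S' T' w) \<partial>Sn2))"
    by (simp add: left_diff_distrib right_diff_distrib int Bochner_Integration.integral_diff)
  then show ?thesis
    unfolding swapped by simp
qed

lemma integral_hybrid_independent:
  fixes h f :: "_ \<Rightarrow> 'c::{real_normed_field, banach, second_countable_topology}"
  assumes [measurable]: "h \<in> borel_measurable Sn" "f \<in> borel_measurable Sn"
    and "integrable Sn (\<lambda>x. (norm (h x))\<^sup>2)" "integrable Sn (\<lambda>x. (norm (f x))\<^sup>2)"
  shows "(\<integral>w. h (hybrid {} {} w) * f (hybrid I I w) \<partial>Sn2) = (\<integral>x. h x \<partial>Sn) * (\<integral>x. f x \<partial>Sn)"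
proof -
  interpret pair_sigma_finite Sn Sn
    using prob_space_Sn by (simp add: pair_sigma_finite_def prob_space_imp_sigma_finite)
  have eq: "h (hybrid {} {} w) * f (hybrid I I w) = h (fst w) * f (snd w)" if "w \<in> space Sn2" for w
    using that by (simp add: hybrid_empty hybrid_all)
  have "integrable Sn2 (\<lambda>w. h (hybrid {} {} w) * f (hybrid I I w))"
    using assms by (rule integrable_mult_hybrid)
  then have "integrable Sn2 (\<lambda>w. h (fst w) * f (snd w))"
    by (simp add: eq cong: Bochner_Integration.integrable_cong)
  then have "(\<integral>w. h (fst w) * f (snd w) \<partial>Sn2) = (\<integral>x. (\<integral>y. h x * f y \<partial>Sn) \<partial>Sn)"
    by (simp add: integral_fst'[symmetric])
  then show ?thesis
    by (simp add: eq cong: Bochner_Integration.integral_cong)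
qed

lemma covariance_eq_hybrid_increments:
  fixes h f :: "(nat \<Rightarrow> 'a) \<times> (nat \<Rightarrow> 'b) \<Rightarrow> 'c::{real_normed_field, banach, second_countable_topology}"
  assumes hf [measurable]: "h \<in> borel_measurable Sn" "f \<in> borel_measurable Sn"
    and square: "integrable Sn (\<lambda>x. (norm (h x))\<^sup>2)" "integrable Sn (\<lambda>x. (norm (f x))\<^sup>2)"
  shows "(\<integral>x. h x * f x \<partial>Sn) - (\<integral>x. h x \<partial>Sn) * (\<integral>x. f x \<partial>Sn) = 1/2 * (
      chain_average I (\<lambda>A j. \<integral>w. (h (hybrid {} {} w) - h (hybrid {j} {} w)) *
          (f (hybrid A {} w) - f (hybrid (insert j A) {} w)) \<partial>Sn2)
    + chain_average I (\<lambda>A j. \<integral>w. (h (hybrid {} {} w) - h (hybrid {} {j} w)) *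
          (f (hybrid I A w) - f (hybrid I (insert j A) w)) \<partial>Sn2))"
proof -
  define g where "g S T = 2 * (\<integral>w. h (hybrid {} {} w) * f (hybrid S T w) \<partial>Sn2)" for S T
  have "chain_average I (\<lambda>A j. \<integral>w. (h (hybrid {} {} w) - h (hybrid {j} {} w)) *
          (f (hybrid A {} w) - f (hybrid (insert j A) {} w)) \<partial>Sn2)
      = chain_average I (\<lambda>A j. g A {} - g (insert j A) {})"
    by (rule chain_average_cong, subst integral_increment_exchange[OF hf square]) (auto simp: g_def)
  also have "\<dots> = g {} {} - g I {}"
    by (rule chain_average_telescope[OF \<theta>.finite_index])
  finally have \<theta>_block: "chain_average I (\<lambda>A j. \<integral>w. (h (hybrid {} {} w) - h (hybrid {j} {} w)) *
          (f (hybrid A {} w) - f (hybrid (insert j A) {} w)) \<partial>Sn2) = g {} {} - g I {}" .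
  have "chain_average I (\<lambda>A j. \<integral>w. (h (hybrid {} {} w) - h (hybrid {} {j} w)) *
          (f (hybrid I A w) - f (hybrid I (insert j A) w)) \<partial>Sn2)
      = chain_average I (\<lambda>A j. g I A - g I (insert j A))"
    by (rule chain_average_cong, subst integral_increment_exchange[OF hf square]) (auto simp: g_def)
  also have "\<dots> = g I {} - g I I"
    by (rule chain_average_telescope[OF \<theta>.finite_index])
  finally have a_block: "chain_average I (\<lambda>A j. \<integral>w. (h (hybrid {} {} w) - h (hybrid {} {j} w)) *
          (f (hybrid I A w) - f (hybrid I (insert j A) w)) \<partial>Sn2) = g I {} - g I I" .
  have "(\<integral>x. h x * f x \<partial>Sn) = (\<integral>w. h (hybrid {} {} w) * f (hybrid {} {} w) \<partial>Sn2)"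
    by (rule integral_hybrid[symmetric]) measurable
  moreover have "(\<integral>x. h x \<partial>Sn) * (\<integral>x. f x \<partial>Sn) = (\<integral>w. h (hybrid {} {} w) * f (hybrid I I w) \<partial>Sn2)"
    using integral_hybrid_independent[OF hf square] ..
  ultimately show ?thesis
    unfolding \<theta>_block a_block by (simp add: g_def)
qed

lemma covariance_eq_chain_average:
  fixes Xt Xt' :: "'w \<Rightarrow> nat \<Rightarrow> 'a" and Xa Xa' :: "'w \<Rightarrow> nat \<Rightarrow> 'b"
    and h f :: "(nat \<Rightarrow> 'a) \<times> (nat \<Rightarrow> 'b) \<Rightarrow> 'c::{real_normed_field, banach, second_countable_topology}"
  assumes X: "(\<lambda>\<omega>. ((Xt \<omega>, Xa \<omega>), (Xt' \<omega>, Xa' \<omega>))) \<in> measurable M Sn2"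
      "distr M Sn2 (\<lambda>\<omega>. ((Xt \<omega>, Xa \<omega>), (Xt' \<omega>, Xa' \<omega>))) = Sn2"
    and hf [measurable]: "h \<in> borel_measurable Sn" "f \<in> borel_measurable Sn"
    and square: "integrable M (\<lambda>\<omega>. (norm (h (Xt \<omega>, Xa \<omega>)))\<^sup>2)" "integrable M (\<lambda>\<omega>. (norm (f (Xt \<omega>, Xa \<omega>)))\<^sup>2)"
  shows "(\<integral>\<omega>. h (Xt \<omega>, Xa \<omega>) * f (Xt \<omega>, Xa \<omega>) \<partial>M)
           - (\<integral>\<omega>. h (Xt \<omega>, Xa \<omega>) \<partial>M) * (\<integral>\<omega>. f (Xt \<omega>, Xa \<omega>) \<partial>M)
       = 1/2 * (
          chain_average I (\<lambda>A j. \<integral>\<omega>. (h (Xt \<omega>, Xa \<omega>) - h (repl {j} (Xt \<omega>) (Xt' \<omega>), Xa \<omega>)) *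
              (f (repl A (Xt \<omega>) (Xt' \<omega>), Xa \<omega>) - f (repl (insert j A) (Xt \<omega>) (Xt' \<omega>), Xa \<omega>)) \<partial>M)
        + chain_average I (\<lambda>A j. \<integral>\<omega>. (h (Xt \<omega>, Xa \<omega>) - h (Xt \<omega>, repl {j} (Xa \<omega>) (Xa' \<omega>))) *
              (f (Xt' \<omega>, repl A (Xa \<omega>) (Xa' \<omega>)) - f (Xt' \<omega>, repl (insert j A) (Xa \<omega>) (Xa' \<omega>))) \<partial>M))"
proof -
  let ?X = "\<lambda>\<omega>. ((Xt \<omega>, Xa \<omega>), (Xt' \<omega>, Xa' \<omega>))"
  have hybrid_X: "hybrid S T (?X \<omega>) = (repl S (Xt \<omega>) (Xt' \<omega>), repl T (Xa \<omega>) (Xa' \<omega>))" for S T \<omega>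
    by (simp add: hybrid_def)
  have repl_all_X: "repl I (Xt \<omega>) (Xt' \<omega>) = Xt' \<omega>" if "\<omega> \<in> space M" for \<omega>
    using hybrid_all_left[OF measurable_space[OF X(1) that]] by (simp add: hybrid_X)
  have to_Sn2: "(\<integral>\<omega>. G (?X \<omega>) \<partial>M) = (\<integral>w. G w \<partial>Sn2)" if "G \<in> borel_measurable Sn2" for G :: "_ \<Rightarrow> 'c"
    using integral_distr[OF X(1) that] X(2) by simp
  have X_measurable: "(\<lambda>\<omega>. (Xt \<omega>, Xa \<omega>)) \<in> measurable M Sn"
    using measurable_compose[OF X(1) measurable_hybrid, of "{}" "{}"] by (simp add: hybrid_X)
  have X_distr: "distr M Sn (\<lambda>\<omega>. (Xt \<omega>, Xa \<omega>)) = Sn"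
    using distr_distr[OF measurable_hybrid X(1), of "{}" "{}"] X(2) by (simp add: distr_hybrid comp_def hybrid_X)
  have to_Sn: "(\<integral>\<omega>. g (Xt \<omega>, Xa \<omega>) \<partial>M) = (\<integral>x. g x \<partial>Sn)" if "g \<in> borel_measurable Sn" for g :: "_ \<Rightarrow> 'c"
    using integral_distr[OF X_measurable that] X_distr by simp
  have square_Sn: "integrable Sn (\<lambda>x. (norm (g x))\<^sup>2)"
    if [measurable]: "g \<in> borel_measurable Sn" "integrable M (\<lambda>\<omega>. (norm (g (Xt \<omega>, Xa \<omega>)))\<^sup>2)" for g :: "_ \<Rightarrow> 'c"
    using integrable_distr_eq[OF X_measurable, of "\<lambda>x. (norm (g x))\<^sup>2"] X_distr that(2) by simp
  have "(\<lambda>x. h x * f x) \<in> borel_measurable Sn"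
    by measurable
  then have moments: "(\<integral>\<omega>. h (Xt \<omega>, Xa \<omega>) * f (Xt \<omega>, Xa \<omega>) \<partial>M) = (\<integral>x. h x * f x \<partial>Sn)"
      "(\<integral>\<omega>. h (Xt \<omega>, Xa \<omega>) \<partial>M) = (\<integral>x. h x \<partial>Sn)" "(\<integral>\<omega>. f (Xt \<omega>, Xa \<omega>) \<partial>M) = (\<integral>x. f x \<partial>Sn)"
    using to_Sn[of "\<lambda>x. h x * f x"] to_Sn[OF hf(1)] to_Sn[OF hf(2)] by simp_all
  have \<theta>_block: "chain_average I (\<lambda>A j. \<integral>\<omega>. (h (Xt \<omega>, Xa \<omega>) - h (repl {j} (Xt \<omega>) (Xt' \<omega>), Xa \<omega>)) *
          (f (repl A (Xt \<omega>) (Xt' \<omega>), Xa \<omega>) - f (repl (insert j A) (Xt \<omega>) (Xt' \<omega>), Xa \<omega>)) \<partial>M)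
      = chain_average I (\<lambda>A j. \<integral>w. (h (hybrid {} {} w) - h (hybrid {j} {} w)) *
          (f (hybrid A {} w) - f (hybrid (insert j A) {} w)) \<partial>Sn2)"
    by (rule chain_average_cong, subst to_Sn2[symmetric]) (simp_all add: hybrid_X)
  have a_block: "chain_average I (\<lambda>A j. \<integral>\<omega>. (h (Xt \<omega>, Xa \<omega>) - h (Xt \<omega>, repl {j} (Xa \<omega>) (Xa' \<omega>))) *
          (f (Xt' \<omega>, repl A (Xa \<omega>) (Xa' \<omega>)) - f (Xt' \<omega>, repl (insert j A) (Xa \<omega>) (Xa' \<omega>))) \<partial>M)
      = chain_average I (\<lambda>A j. \<integral>w. (h (hybrid {} {} w) - h (hybrid {} {j} w)) *
          (f (hybrid I A w) - f (hybrid I (insert j A) w)) \<partial>Sn2)"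
    by (rule chain_average_cong, subst to_Sn2[symmetric])
      (simp_all add: hybrid_X repl_all_X cong: Bochner_Integration.integral_cong)
  show ?thesis
    unfolding moments \<theta>_block a_block
    by (rule covariance_eq_hybrid_increments[OF hf square_Sn[OF hf(1) square(1)] square_Sn[OF hf(2) square(2)]])
qed

end

theorem lemma4p1:
  fixes M :: "'w measure" and \<xi> :: real and n :: nat
    and \<nu>0 :: "((real^3) \<times> real) measure" and \<nu>1 :: "complex measure"
    and Xt Xt' :: "'w \<Rightarrow> nat \<Rightarrow> (real^3) \<times> real"
    and Xa Xa' :: "'w \<Rightarrow> nat \<Rightarrow> complex"
    and h f :: "(nat \<Rightarrow> (real^3) \<times> real) \<times> (nat \<Rightarrow> complex) \<Rightarrow> complex"
  assumes "0 < \<xi>" "\<xi> < 1/2" "n \<ge> 1"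
    and "prob_space M"
    and "prob_space \<nu>0" "sets \<nu>0 = sets borel" "emeasure \<nu>0 (S0 \<xi>) = 1"
    and "prob_space \<nu>1" "sets \<nu>1 = sets borel" "emeasure \<nu>1 Cplus = 1"
    and "(\<lambda>\<omega>. ((Xt \<omega>, Xa \<omega>), (Xt' \<omega>, Xa' \<omega>))) \<in> measurable M (SnM n \<Otimes>\<^sub>M SnM n)"
    and "distr M (SnM n \<Otimes>\<^sub>M SnM n) (\<lambda>\<omega>. ((Xt \<omega>, Xa \<omega>), (Xt' \<omega>, Xa' \<omega>))) =
           (PiM {1..n} (\<lambda>_. \<nu>0) \<Otimes>\<^sub>M PiM {1..n} (\<lambda>_. \<nu>1)) \<Otimes>\<^sub>M
           (PiM {1..n} (\<lambda>_. \<nu>0) \<Otimes>\<^sub>M PiM {1..n} (\<lambda>_. \<nu>1))"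
    and "h \<in> borel_measurable (SnM n)" "f \<in> borel_measurable (SnM n)"
    and "integrable M (\<lambda>\<omega>. (cmod (h (Xt \<omega>, Xa \<omega>)))^2)"
    and "integrable M (\<lambda>\<omega>. (cmod (f (Xt \<omega>, Xa \<omega>)))^2)"
  shows "(\<integral>\<omega>. h (Xt \<omega>, Xa \<omega>) * f (Xt \<omega>, Xa \<omega>) \<partial>M)
           - (\<integral>\<omega>. h (Xt \<omega>, Xa \<omega>) \<partial>M) * (\<integral>\<omega>. f (Xt \<omega>, Xa \<omega>) \<partial>M)
       = 1/2 * (
          (\<Sum>A\<in>{A. A \<subset> {1..n}}. 1 / (of_nat (n choose card A) * of_nat (n - card A)) *
             (\<Sum>j\<in>{1..n} - A.
                \<integral>\<omega>. (h (Xt \<omega>, Xa \<omega>) - h (repl {j} (Xt \<omega>) (Xt' \<omega>), Xa \<omega>)) *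
                    (f (repl A (Xt \<omega>) (Xt' \<omega>), Xa \<omega>) - f (repl (insert j A) (Xt \<omega>) (Xt' \<omega>), Xa \<omega>)) \<partial>M))
        + (\<Sum>A\<in>{A. A \<subset> {1..n}}. 1 / (of_nat (n choose card A) * of_nat (n - card A)) *
             (\<Sum>j\<in>{1..n} - A.
                \<integral>\<omega>. (h (Xt \<omega>, Xa \<omega>) - h (Xt \<omega>, repl {j} (Xa \<omega>) (Xa' \<omega>))) *
                    (f (Xt' \<omega>, repl A (Xa \<omega>) (Xa' \<omega>)) - f (Xt' \<omega>, repl (insert j A) (Xa \<omega>) (Xa' \<omega>))) \<partial>M)))"
proof -
  let ?Sn = "PiM {1..n} (\<lambda>_. \<nu>0) \<Otimes>\<^sub>M PiM {1..n} (\<lambda>_. \<nu>1)"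
  have blocks: "two_block_product (\<lambda>_. \<nu>0) (\<lambda>_. \<nu>1) {1..n}"
    unfolding two_block_product_def using assms(5,8) by (simp add: finite_product_prob_space_const)
  have sets_Sn: "sets (SnM n) = sets ?Sn"
    unfolding SnM_def using assms(6,9) by (intro sets_pair_measure_cong sets_PiM_cong) simp_all
  have sets_Sn2: "sets (SnM n \<Otimes>\<^sub>M SnM n) = sets (?Sn \<Otimes>\<^sub>M ?Sn)"
    by (rule sets_pair_measure_cong[OF sets_Sn sets_Sn])
  have X: "(\<lambda>\<omega>. ((Xt \<omega>, Xa \<omega>), (Xt' \<omega>, Xa' \<omega>))) \<in> measurable M (?Sn \<Otimes>\<^sub>M ?Sn)"
    using assms(11) by (simp only: measurable_cong_sets[OF refl sets_Sn2])
  have "distr M (?Sn \<Otimes>\<^sub>M ?Sn) (\<lambda>\<omega>. ((Xt \<omega>, Xa \<omega>), (Xt' \<omega>, Xa' \<omega>)))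
      = distr M (SnM n \<Otimes>\<^sub>M SnM n) (\<lambda>\<omega>. ((Xt \<omega>, Xa \<omega>), (Xt' \<omega>, Xa' \<omega>)))"
    by (rule distr_cong[OF refl sets_Sn2[symmetric]]) simp
  then have X_distr: "distr M (?Sn \<Otimes>\<^sub>M ?Sn) (\<lambda>\<omega>. ((Xt \<omega>, Xa \<omega>), (Xt' \<omega>, Xa' \<omega>))) = ?Sn \<Otimes>\<^sub>M ?Sn"
    unfolding assms(12) .
  have hf: "h \<in> borel_measurable ?Sn" "f \<in> borel_measurable ?Sn"
    using assms(13,14) by (simp_all only: measurable_cong_sets[OF sets_Sn refl])
  have card_n: "card {1..n} = n"
    by simp
  show ?thesis
    using two_block_product.covariance_eq_chain_average[OF blocks X X_distr hf assms(15,16)]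
    unfolding chain_average_def chain_weight_def card_n .
qed

end
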